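(* Consider one iteration of IFCA in the distributed linear regression model described in the context, with current parameter vectors $\theta_1,\ldots,\theta_k$ satisfying $\|\theta_j-\theta_j^*\|\le(\frac12-\alpha)\Delta$ for all $j\in[k]$, where $0<\alpha<\frac12$. Suppose worker machine $i$ belongs to $S_j^*$, and let $\rho=\Delta^2/\sigma^2$. For $j'\in[k]$ let $\mathcal E_i^{j,j'}$ be the event that machine $i$ is assigned to cluster $j'$ in this iteration, and let $\mathcal E_i=\mathcal E_i^{j,j}$. Then there exist universal constants $c_1,c_2>0$ such that for any $j'\neq j$, \[ \mathbb{P}(\mathcal{E}_i^{j,j'}) \le c_1\exp\left(-c_2n'\left(\frac{\alpha \rho}{\rho+1}\right)^2\right), \qquad \mathbb{P}(\overline{\mathcal{E}_i}) \le c_1 k \exp\left(-c_2n'\left(\frac{\alpha \rho}{\rho+1}\right)^2\right). \]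
   Context: Setting: $m$ worker machines partitioned into $k$ unknown disjoint clusters $S_1^*,\ldots,S_k^*$. Every machine in $S_j^*$ holds i.i.d. data points $(x,y)$ with $y=\langle x,\theta_j^*\rangle+\epsilon$, $x\sim\mathcal N(0,I_d)$, $\epsilon\sim\mathcal N(0,\sigma^2)$ independent of $x$. Loss $f(\theta;x,y)=(y-\langle x,\theta\rangle)^2$, and $F_i(\theta;Z)=\frac1{|Z|}\sum_{z\in Z}f(\theta;z)$. $\Delta=\min_{j\neq j'}\|\theta_j^*-\theta_{j'}^*\|$. In the iteration, machine $i$ uses a fresh set $\widehat Z_i$ of $n'$ i.i.d. data points, independent of the current parameters, and is assigned to cluster $\mathrm{argmin}_{j'\in[k]}F_i(\theta_{j'};\widehat Z_i)$; thus $\mathcal E_i^{j,j'}$ is the event that $j'$ is this argmin. $\overline{\mathcal E_i}$ denotes the complement of $\mathcal E_i$. *)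

theory Defs
  imports "HOL-Probability.Probability"
begin

text \<open>Vectors in R^d are represented as functions nat => real, only coordinates l < d matter
  (so that the dimension d can be quantified inside the statement, after the universal constants).\<close>

definition ip :: "nat \<Rightarrow> (nat \<Rightarrow> real) \<Rightarrow> (nat \<Rightarrow> real) \<Rightarrow> real" where
  "ip d u v = (\<Sum>l<d. u l * v l)"

definition vnorm :: "nat \<Rightarrow> (nat \<Rightarrow> real) \<Rightarrow> real" where
  "vnorm d u = sqrt (ip d u u)"

definition Delta :: "nat \<Rightarrow> nat \<Rightarrow> (nat \<Rightarrow> nat \<Rightarrow> real) \<Rightarrow> real" where
  "Delta d k thetas = Min {vnorm d (thetas a - thetas b) | a b. a < k \<and> b < k \<and> a \<noteq> b}"

definition gauss_vec :: "nat \<Rightarrow> (nat \<Rightarrow> real) measure" where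
  "gauss_vec d = PiM {..<d} (\<lambda>_. density lborel std_normal_density)"

definition data_dist :: "nat \<Rightarrow> (nat \<Rightarrow> real) \<Rightarrow> real \<Rightarrow> ((nat \<Rightarrow> real) \<times> real) measure" where
  "data_dist d theta sg =
     distr (gauss_vec d \<Otimes>\<^sub>M density lborel (normal_density 0 sg))
           (PiM {..<d} (\<lambda>_. borel) \<Otimes>\<^sub>M borel)
           (\<lambda>(x, e). (x, ip d x theta + e))"

definition sample_dist :: "nat \<Rightarrow> nat \<Rightarrow> (nat \<Rightarrow> real) \<Rightarrow> real \<Rightarrow> (nat \<Rightarrow> (nat \<Rightarrow> real) \<times> real) measure" where
  "sample_dist n' d theta sg = PiM {..<n'} (\<lambda>_. data_dist d theta sg)"

definition emp_loss :: "nat \<Rightarrow> nat \<Rightarrow> (nat \<Rightarrow> real) \<Rightarrow> (nat \<Rightarrow> (nat \<Rightarrow> real) \<times> real) \<Rightarrow> real" where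
  "emp_loss n' d theta Z = (1 / real n') * (\<Sum>t<n'. (snd (Z t) - ip d (fst (Z t)) theta)\<^sup>2)"

definition assign :: "nat \<Rightarrow> nat \<Rightarrow> nat \<Rightarrow> (nat \<Rightarrow> nat \<Rightarrow> real) \<Rightarrow> (nat \<Rightarrow> (nat \<Rightarrow> real) \<times> real) \<Rightarrow> nat" where
  "assign n' d k theta Z =
     (LEAST l. l < k \<and> (\<forall>l'<k. emp_loss n' d (theta l) Z \<le> emp_loss n' d (theta l') Z))"

end

theory Submission
  imports Defs
begin

(*
  Under the data distribution of cluster j, the residual y - <x, theta> of a fixed parameter theta
  is centred Gaussian with variance |theta_j^* - theta|^2 + sigma^2, so the squared residual has an
  explicit moment generating function and Chernoff bounds control the empirical loss of the n'
  fresh samples. If machine i picks j' <> j, the loss at theta_j' is at most the loss at theta_j, so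
  either the loss at theta_j exceeds n' T or the loss at theta_j' falls below n' T, where
  T = |theta_j^* - theta_j|^2 + sigma^2 + alpha Delta^2. Because theta_j is within (1/2 - alpha) Delta
  of theta_j^* and theta_j' at least (1/2 + alpha) Delta away from it, the two residual variances
  differ by at least 2 alpha Delta^2, and both events have probability at most exp (- n' q^2 / 32)
  with q = alpha Delta^2 / (Delta^2 + sigma^2) = alpha rho / (rho + 1). A union bound over j' <> j
  gives the second estimate; so c1 = 2 and c2 = 1/32 work.
*)

section \<open>Gaussian and product measures\<close>

abbreviation std_normal :: "real measure" where
  "std_normal \<equiv> density lborel std_normal_density"

abbreviation normal :: "real \<Rightarrow> real measure" where
  "normal s \<equiv> density lborel (normal_density 0 s)"

lemma nn_integral_normal_density_exp_square:
  fixes s mu c :: real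
  assumes s: "0 < s" and mu: "2 * mu * s\<^sup>2 < 1"
  shows "(\<integral>\<^sup>+z. ennreal (normal_density 0 s z * exp (mu * z\<^sup>2 + c)) \<partial>lborel)
         = ennreal (exp c / sqrt (1 - 2 * mu * s\<^sup>2))"
proof -
  define q where "q = 1 - 2 * mu * s\<^sup>2"
  have q: "0 < q" using mu by (simp add: q_def)
  define s' where "s' = s / sqrt q"
  have s': "0 < s'" using s q by (simp add: s'_def)
  \<comment> \<open>Multiplying by the Gaussian factor just rescales the standard deviation to \<open>s / sqrt q\<close>.\<close>
  have rescale: "normal_density 0 s z * exp (mu * z\<^sup>2 + c) = exp c / sqrt q * normal_density 0 s' z" for z
  proof -
    have "- z\<^sup>2 / (2 * s\<^sup>2) + mu * z\<^sup>2 = - z\<^sup>2 / (2 * s'\<^sup>2)"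
      using s q by (simp add: s'_def q_def field_simps)
    moreover have "sqrt (2 * pi * s'\<^sup>2) = sqrt (2 * pi * s\<^sup>2) / sqrt q"
      using s q by (simp add: s'_def real_sqrt_divide real_sqrt_mult power_divide)
    ultimately show ?thesis
      using q by (simp add: normal_density_def exp_add[symmetric] field_simps)
  qed
  have "(\<integral>\<^sup>+z. ennreal (normal_density 0 s z * exp (mu * z\<^sup>2 + c)) \<partial>lborel)
      = (\<integral>\<^sup>+z. ennreal (exp c / sqrt q) * ennreal (normal_density 0 s' z) \<partial>lborel)"
  proof (rule nn_integral_cong)
    show "ennreal (normal_density 0 s z * exp (mu * z\<^sup>2 + c))
        = ennreal (exp c / sqrt q) * ennreal (normal_density 0 s' z)" for z
      unfolding rescale using q by (intro ennreal_mult') simp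
  qed
  also have "\<dots> = ennreal (exp c / sqrt q) * (\<integral>\<^sup>+z. ennreal (normal_density 0 s' z) \<partial>lborel)"
    by (rule nn_integral_cmult) simp
  also have "(\<integral>\<^sup>+z. ennreal (normal_density 0 s' z) \<partial>lborel) = 1"
    using s' by (subst nn_integral_eq_integral) auto
  finally show ?thesis by (simp add: q_def)
qed

lemma distr_pair_snd:
  assumes "prob_space M" "sigma_finite_measure N"
  shows "distr (M \<Otimes>\<^sub>M N) N snd = N"
proof (rule measure_eqI)
  interpret M: prob_space M by fact
  interpret N: sigma_finite_measure N by fact
  fix A assume A: "A \<in> sets (distr (M \<Otimes>\<^sub>M N) N snd)"
  then have "emeasure (distr (M \<Otimes>\<^sub>M N) N snd) A = emeasure (M \<Otimes>\<^sub>M N) (space M \<times> A)"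
    by (auto simp: emeasure_distr space_pair_measure dest: sets.sets_into_space
        intro!: arg_cong2[where f=emeasure])
  with A show "emeasure (distr (M \<Otimes>\<^sub>M N) N snd) A = emeasure N A"
    by (simp add: N.emeasure_pair_measure_Times M.emeasure_space_1)
qed simp

lemma distributed_pair_add_normal:
  fixes X :: "'a \<Rightarrow> real"
  assumes X: "distributed M lborel X (normal_density 0 s)"
    and s: "0 < s" and sg: "0 < sg"
  shows "distributed (M \<Otimes>\<^sub>M normal sg) lborel (\<lambda>(x, e). X x + e)
           (normal_density 0 (sqrt (s\<^sup>2 + sg\<^sup>2)))"
proof -
  interpret N: prob_space "normal sg" using prob_space_normal_density[OF sg] .
  interpret S: prob_space "normal s" using prob_space_normal_density[OF s] .
  have [measurable]: "X \<in> borel_measurable M" using distributed_measurable[OF X] by simp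
  have "distr M borel X \<Otimes>\<^sub>M distr (normal sg) borel (\<lambda>e. e)
      = distr (M \<Otimes>\<^sub>M normal sg) (borel \<Otimes>\<^sub>M borel) (\<lambda>(x, e). (X x, e))"
    by (intro pair_measure_distr prob_space_imp_sigma_finite N.prob_space_distr) simp_all
  then have "distr (M \<Otimes>\<^sub>M normal sg) borel (\<lambda>(x, e). X x + e)
      = (distr M borel X \<star> distr (normal sg) borel (\<lambda>e. e))"
    unfolding convolution_def by (simp add: distr_distr comp_def split_beta')
  also have "distr M borel X = normal s"
    using distributed_distr_eq_density[OF X] by (simp cong: distr_cong)
  also have "distr (normal sg) borel (\<lambda>e. e) = normal sg"
    by (rule distr_id2) simp
  also have "(normal s \<star> normal sg)
      = density lborel (\<lambda>x. \<integral>\<^sup>+y. ennreal (normal_density 0 s (x - y)) * ennreal (normal_density 0 sg y) \<partial>lborel)"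
    by (rule convolution_density) simp_all
  also have "\<dots> = density lborel (normal_density 0 (sqrt (s\<^sup>2 + sg\<^sup>2)))"
    using conv_normal_density_zero_mean[OF s sg] by (simp add: ennreal_mult'[symmetric] normal_density_nonneg)
  finally show ?thesis
    unfolding distributed_def by (simp cong: distr_cong)
qed

lemma (in product_prob_space) indep_vars_PiM_components:
  assumes "I \<noteq> {}"
  shows "prob_space.indep_vars (PiM I M) M (\<lambda>i x. x i) I"
proof (subst prob_space.indep_vars_iff_distr_eq_PiM'[OF P.prob_space_axioms assms])
  have "distr (PiM I M) (PiM I M) (\<lambda>x. \<lambda>i\<in>I. x i) = distr (PiM I M) (PiM I M) (\<lambda>x. x)"
    by (intro distr_cong) (auto simp: space_PiM)
  also have "\<dots> = PiM I (\<lambda>i. distr (PiM I M) (M i) (\<lambda>x. x i))"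
    by (simp add: PiM_component cong: PiM_cong)
  finally show "distr (PiM I M) (PiM I M) (\<lambda>x. \<lambda>i\<in>I. x i) = PiM I (\<lambda>i. distr (PiM I M) (M i) (\<lambda>x. x i))" .
qed auto

lemma (in product_sigma_finite) emeasure_PiM_sum_nonneg_le:
  assumes I: "finite I" and h: "\<And>i. i \<in> I \<Longrightarrow> h i \<in> borel_measurable (M i)"
  shows "emeasure (PiM I M) {x \<in> space (PiM I M). 0 \<le> (\<Sum>i\<in>I. h i (x i))}
         \<le> (\<Prod>i\<in>I. \<integral>\<^sup>+y. exp (h i y) \<partial>M i)"
proof -
  have [measurable]: "(\<lambda>x. \<Sum>i\<in>I. h i (x i)) \<in> borel_measurable (PiM I M)"
    using h by measurable
  let ?A = "{x \<in> space (PiM I M). 0 \<le> (\<Sum>i\<in>I. h i (x i))}"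
  have "emeasure (PiM I M) ?A = (\<integral>\<^sup>+x. indicator ?A x \<partial>PiM I M)"
    by simp
  also have "\<dots> \<le> (\<integral>\<^sup>+x. exp (\<Sum>i\<in>I. h i (x i)) \<partial>PiM I M)"
    by (intro nn_integral_mono) (auto split: split_indicator)
  also have "\<dots> = (\<integral>\<^sup>+x. (\<Prod>i\<in>I. ennreal (exp (h i (x i)))) \<partial>PiM I M)"
    using I by (simp add: exp_sum prod_ennreal)
  also have "\<dots> = (\<Prod>i\<in>I. \<integral>\<^sup>+y. exp (h i y) \<partial>M i)"
    using I h by (intro product_nn_integral_prod) auto
  finally show ?thesis .
qed

lemma ip_nonneg: "0 \<le> ip d w w"
  unfolding ip_def by (auto intro: sum_nonneg)

lemma vnorm_nonneg: "0 \<le> vnorm d w"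
  unfolding vnorm_def using ip_nonneg by simp

lemma ip_diff_right: "ip d x (a - b) = ip d x a - ip d x b"
  unfolding ip_def by (simp add: sum_subtractf right_diff_distrib)

lemma vnorm_eq_0_imp_ip_eq_0:
  assumes "vnorm d w = 0"
  shows "ip d x w = 0"
proof -
  have "(\<Sum>l<d. w l * w l) = 0" using assms by (simp add: vnorm_def ip_def)
  then have "\<forall>l<d. w l = 0" by (subst (asm) sum_nonneg_eq_0_iff) auto
  then show ?thesis unfolding ip_def by simp
qed

lemma ip_measurable [measurable]: "(\<lambda>x. ip d x w) \<in> borel_measurable (PiM {..<d} (\<lambda>_. borel))"
  unfolding ip_def by measurable

lemma vnorm_minus_commute: "vnorm d (a - b) = vnorm d (b - a)"
  unfolding vnorm_def ip_def by (simp add: algebra_simps)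

lemma vnorm_triangle: "vnorm d (a - c) \<le> vnorm d (a - b) + vnorm d (b - c)"
proof -
  have "vnorm d u = L2_set u {..<d}" for u
    unfolding vnorm_def ip_def L2_set_def by (simp add: power2_eq_square)
  then show ?thesis
    using L2_set_triangle_ineq[of "a - b" "b - c" "{..<d}"] by (simp add: fun_diff_def)
qed

lemma Delta_le_vnorm:
  assumes "a < k" "b < k" "a \<noteq> b"
  shows "Delta d k th \<le> vnorm d (th a - th b)"
proof -
  have "{vnorm d (th a - th b) | a b. a < k \<and> b < k \<and> a \<noteq> b}
      \<subseteq> (\<lambda>(a, b). vnorm d (th a - th b)) ` ({..<k} \<times> {..<k})"
    by auto
  then show ?thesis
    unfolding Delta_def using assms by (intro Min_le) (auto dest: finite_subset)
qed

lemma Delta_minus_vnorm_le: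
  assumes "a < k" "b < k" "a \<noteq> b"
  shows "Delta d k th - vnorm d (th' b - th b) \<le> vnorm d (th a - th' b)"
  using Delta_le_vnorm[OF assms, of d th] vnorm_triangle[of d "th a" "th b" "th' b"] by linarith

section \<open>The regression model\<close>

lemma prob_space_std_normal: "prob_space std_normal"
  using prob_space_normal_density[of 1 0] by simp

lemma prob_space_gauss_vec: "prob_space (gauss_vec d)"
  unfolding gauss_vec_def by (intro prob_space_PiM prob_space_std_normal)

lemma sets_gauss_vec [measurable_cong]: "sets (gauss_vec d) = sets (PiM {..<d} (\<lambda>_. borel))"
  unfolding gauss_vec_def by (intro sets_PiM_cong) auto

lemma distributed_gauss_vec_ip:
  assumes pos: "0 < vnorm d w"
  shows "distributed (gauss_vec d) lborel (\<lambda>x. ip d x w) (normal_density 0 (vnorm d w))"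
proof -
  interpret product_prob_space "\<lambda>_. std_normal" "{..<d}"
    by (intro product_prob_spaceI prob_space_std_normal)
  let ?G = "PiM {..<d} (\<lambda>_. std_normal)"
  define I where "I = {l\<in>{..<d}. w l \<noteq> 0}"
  have "I \<noteq> {}"
  proof
    assume "I = {}"
    then have "ip d w w = 0" unfolding ip_def I_def by (auto intro!: sum.neutral)
    then show False using pos by (simp add: vnorm_def)
  qed
  then have "{..<d} \<noteq> {}" by (auto simp: I_def)
  have "P.indep_vars (\<lambda>_. borel) (\<lambda>l x. w l * x l) {..<d}"
    using P.indep_vars_compose2[OF indep_vars_PiM_components[OF \<open>{..<d} \<noteq> {}\<close>],
        of "\<lambda>l z. w l * z" "\<lambda>_. borel"]
    by simp
  then have indep: "P.indep_vars (\<lambda>_. borel) (\<lambda>l x. w l * x l) I"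
    by (rule P.indep_vars_subset) (auto simp: I_def)
  have "distributed ?G lborel (\<lambda>x. x l) std_normal_density" if "l < d" for l
    using that PiM_component[of l] unfolding distributed_def by (simp cong: distr_cong)
  then have "distributed ?G lborel (\<lambda>x. 0 + w l * x l) (normal_density (0 + w l * 0) (\<bar>w l\<bar> * 1))"
    if "l \<in> I" for l
    using that by (intro P.normal_density_affine) (simp_all add: I_def)
  then have "distributed ?G lborel (\<lambda>x. \<Sum>l\<in>I. w l * x l)
      (normal_density (\<Sum>l\<in>I. 0) (sqrt (\<Sum>l\<in>I. \<bar>w l\<bar>\<^sup>2)))"
    by (intro P.sum_indep_normal indep \<open>I \<noteq> {}\<close>) (simp_all add: I_def)
  moreover have "(\<lambda>x. \<Sum>l\<in>I. w l * x l) = (\<lambda>x. ip d x w)"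
    unfolding ip_def I_def by (intro ext sum.mono_neutral_cong_left) auto
  moreover have "sqrt (\<Sum>l\<in>I. \<bar>w l\<bar>\<^sup>2) = vnorm d w"
    unfolding vnorm_def ip_def I_def
    by (intro arg_cong[where f=sqrt] sum.mono_neutral_cong_left) (auto simp: power2_eq_square)
  ultimately show ?thesis unfolding gauss_vec_def by simp
qed

definition residual_variance :: "nat \<Rightarrow> (nat \<Rightarrow> real) \<Rightarrow> (nat \<Rightarrow> real) \<Rightarrow> real \<Rightarrow> real" where
  "residual_variance d ths th sg = (vnorm d (ths - th))\<^sup>2 + sg\<^sup>2"

lemma residual_variance_pos: "0 < sg \<Longrightarrow> 0 < residual_variance d ths th sg"
  unfolding residual_variance_def by (simp add: add_nonneg_pos)

lemma distributed_data_residual: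
  assumes sg: "0 < sg"
  shows "distributed (data_dist d ths sg) lborel (\<lambda>p. snd p - ip d (fst p) th)
           (normal_density 0 (sqrt (residual_variance d ths th sg)))"
proof -
  let ?GN = "gauss_vec d \<Otimes>\<^sub>M normal sg"
  interpret G: prob_space "gauss_vec d" by (rule prob_space_gauss_vec)
  interpret N: prob_space "normal sg" using prob_space_normal_density[OF sg] .
  have [measurable]: "(\<lambda>(x, e). (x, ip d x ths + e)) \<in> ?GN \<rightarrow>\<^sub>M PiM {..<d} (\<lambda>_. borel) \<Otimes>\<^sub>M borel"
    by measurable
  have residual: "(\<lambda>p. snd p - ip d (fst p) th) \<circ> (\<lambda>(x, e). (x, ip d x ths + e))
      = (\<lambda>(x, e). ip d x (ths - th) + e)"
    by (auto simp: ip_diff_right)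
  have "distributed ?GN lborel (\<lambda>(x, e). ip d x (ths - th) + e)
      (normal_density 0 (sqrt ((vnorm d (ths - th))\<^sup>2 + sg\<^sup>2)))"
  proof (cases "vnorm d (ths - th) = 0")
    case True
    then have "(\<lambda>(x, e). ip d x (ths - th) + e) = snd"
      by (auto simp: vnorm_eq_0_imp_ip_eq_0)
    moreover have "distr ?GN lborel snd = normal sg"
      using distr_pair_snd[OF G.prob_space_axioms N.sigma_finite_measure_axioms] by (simp cong: distr_cong)
    ultimately show ?thesis
      using True sg unfolding distributed_def by simp
  next
    case False
    then show ?thesis
      using vnorm_nonneg[of d "ths - th"] sg
      by (intro distributed_pair_add_normal distributed_gauss_vec_ip) auto
  qed
  then show ?thesis
    unfolding distributed_def data_dist_def residual_variance_def residual[symmetric]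
    by (simp add: distr_distr)
qed

lemma nn_integral_data_exp_residual_square:
  assumes sg: "0 < sg" and mu: "2 * mu * residual_variance d ths th sg < 1"
  shows "(\<integral>\<^sup>+p. ennreal (exp (mu * (snd p - ip d (fst p) th)\<^sup>2 + c)) \<partial>data_dist d ths sg)
         = ennreal (exp c / sqrt (1 - 2 * mu * residual_variance d ths th sg))"
proof -
  define V where "V = residual_variance d ths th sg"
  have V: "0 < V" using residual_variance_pos[OF sg] by (simp add: V_def)
  have "(\<integral>\<^sup>+p. ennreal (exp (mu * (snd p - ip d (fst p) th)\<^sup>2 + c)) \<partial>data_dist d ths sg)
      = (\<integral>\<^sup>+z. ennreal (normal_density 0 (sqrt V) z) * ennreal (exp (mu * z\<^sup>2 + c)) \<partial>lborel)"
    using distributed_nn_integral[OF distributed_data_residual[OF sg, of d ths th]]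
    by (simp add: V_def)
  also have "\<dots> = (\<integral>\<^sup>+z. ennreal (normal_density 0 (sqrt V) z * exp (mu * z\<^sup>2 + c)) \<partial>lborel)"
    by (simp add: ennreal_mult normal_density_nonneg)
  also have "\<dots> = ennreal (exp c / sqrt (1 - 2 * mu * V))"
    using V mu by (subst nn_integral_normal_density_exp_square) (simp_all add: V_def)
  finally show ?thesis by (simp add: V_def)
qed

lemma prob_space_data_dist:
  assumes sg: "0 < sg"
  shows "prob_space (data_dist d ths sg)"
proof -
  interpret G: prob_space "gauss_vec d" by (rule prob_space_gauss_vec)
  interpret N: prob_space "normal sg" using prob_space_normal_density[OF sg] .
  interpret GN: pair_prob_space "gauss_vec d" "normal sg" ..
  show ?thesis unfolding data_dist_def by (rule GN.prob_space_distr) measurable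
qed

lemma prob_space_sample_dist: "0 < sg \<Longrightarrow> prob_space (sample_dist n' d ths sg)"
  unfolding sample_dist_def by (intro prob_space_PiM prob_space_data_dist)

lemma sets_sample_dist [measurable_cong]:
  "sets (sample_dist n' d ths sg) = sets (PiM {..<n'} (\<lambda>_. PiM {..<d} (\<lambda>_. borel) \<Otimes>\<^sub>M borel))"
  unfolding sample_dist_def data_dist_def by (intro sets_PiM_cong) auto

section \<open>Chernoff bounds for the squared residuals\<close>

definition loss_sum :: "nat \<Rightarrow> nat \<Rightarrow> (nat \<Rightarrow> real) \<Rightarrow> (nat \<Rightarrow> (nat \<Rightarrow> real) \<times> real) \<Rightarrow> real" where
  "loss_sum n' d th Z = (\<Sum>t<n'. (snd (Z t) - ip d (fst (Z t)) th)\<^sup>2)"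

lemma loss_sum_measurable [measurable]:
  "loss_sum n' d th \<in> borel_measurable (PiM {..<n'} (\<lambda>_. PiM {..<d} (\<lambda>_. borel) \<Otimes>\<^sub>M borel))"
  unfolding loss_sum_def by measurable

lemma sum_lessThan_affine:
  fixes a b :: real
  shows "(\<Sum>t<n. a * f t + b) = a * (\<Sum>t<n. f t) + real n * b"
  by (simp add: sum.distrib sum_distrib_left)

lemma sample_residual_chernoff:
  fixes mu c K :: real
  assumes sg: "0 < sg" and mu: "2 * mu * residual_variance d ths th sg < 1"
    and exponent: "c - ln (1 - 2 * mu * residual_variance d ths th sg) / 2 \<le> - K"
  shows "measure (sample_dist n' d ths sg)
           {Z \<in> space (sample_dist n' d ths sg).
              0 \<le> mu * loss_sum n' d th Z + real n' * c}
         \<le> exp (- real n' * K)"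
proof -
  define z where "z = 1 - 2 * mu * residual_variance d ths th sg"
  define b where "b = exp c / sqrt z"
  have "0 < z" using mu by (simp add: z_def)
  then have "sqrt z = exp (ln z / 2)" by (simp add: ln_sqrt[symmetric])
  then have b: "b = exp (c - ln z / 2)" by (simp add: b_def exp_diff)
  interpret D: prob_space "data_dist d ths sg" by (rule prob_space_data_dist[OF sg])
  interpret product_prob_space "\<lambda>_. data_dist d ths sg" "{..<n'}" ..
  interpret S: prob_space "sample_dist n' d ths sg" by (rule prob_space_sample_dist[OF sg])
  let ?h = "\<lambda>p. mu * (snd p - ip d (fst p) th)\<^sup>2 + c"
  have "emeasure (sample_dist n' d ths sg)
           {Z \<in> space (sample_dist n' d ths sg). 0 \<le> (\<Sum>t<n'. ?h (Z t))}
        \<le> (\<Prod>t<n'. \<integral>\<^sup>+p. exp (?h p) \<partial>data_dist d ths sg)"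
    unfolding sample_dist_def by (rule emeasure_PiM_sum_nonneg_le) (simp_all add: data_dist_def)
  also have "\<dots> = ennreal (b ^ n')"
    using nn_integral_data_exp_residual_square[OF sg mu] b
    by (simp add: b_def z_def ennreal_power)
  finally have "measure (sample_dist n' d ths sg)
           {Z \<in> space (sample_dist n' d ths sg). 0 \<le> (\<Sum>t<n'. ?h (Z t))} \<le> b ^ n'"
    by (simp add: S.emeasure_eq_measure b)
  also have "\<dots> \<le> exp (- K) ^ n'"
    using exponent by (simp add: b z_def power_mono)
  also have "\<dots> = exp (- real n' * K)"
    by (simp add: exp_of_nat_mult[symmetric])
  finally show ?thesis by (simp only: loss_sum_def sum_lessThan_affine)
qed

lemma sample_residual_upper_tail:
  fixes S eps T :: real
  assumes sg: "0 < sg" and VS: "residual_variance d ths th sg \<le> S"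
    and eps: "0 \<le> eps" "eps \<le> 2" and T: "residual_variance d ths th sg + eps * S \<le> T"
  shows "measure (sample_dist n' d ths sg)
           {Z \<in> space (sample_dist n' d ths sg). real n' * T \<le> loss_sum n' d th Z}
         \<le> exp (- real n' * eps\<^sup>2 / 16)"
proof -
  interpret S: prob_space "sample_dist n' d ths sg" by (rule prob_space_sample_dist[OF sg])
  define V where "V = residual_variance d ths th sg"
  have V: "0 < V" using residual_variance_pos[OF sg] by (simp add: V_def)
  with VS have S: "0 < S" by (simp add: V_def)
  define lam where "lam = eps / (8 * S)"
  have lam: "0 \<le> lam" using eps S by (simp add: lam_def)
  define x where "x = 2 * lam * V"
  have "eps * V \<le> eps * S" using VS eps by (simp add: V_def mult_left_mono)
  then have x: "0 \<le> x" "x \<le> eps / 4"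
    using lam V S by (auto simp: x_def lam_def field_simps)
  have "- lam * T - ln (1 - x) / 2 \<le> - lam * T + x / 2 + x\<^sup>2"
    using ln_one_minus_pos_lower_bound[of x] x eps by simp
  also have "\<dots> \<le> - lam * (V + eps * S) + lam * V + (eps / 4)\<^sup>2"
    using T lam x by (intro add_mono power_mono) (auto simp: V_def x_def mult_left_mono)
  also have "\<dots> = - (eps\<^sup>2 / 16)"
    using S by (simp add: lam_def power2_eq_square field_simps)
  finally have exponent: "- lam * T - ln (1 - 2 * lam * V) / 2 \<le> - (eps\<^sup>2 / 16)"
    by (simp add: x_def)
  have "0 \<le> lam * s + real n' * (- lam * T)" if "real n' * T \<le> s" for s
    using mult_left_mono[OF that lam] by (simp add: algebra_simps)
  then have "{Z \<in> space (sample_dist n' d ths sg). real n' * T \<le> loss_sum n' d th Z}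
      \<subseteq> {Z \<in> space (sample_dist n' d ths sg).
           0 \<le> lam * loss_sum n' d th Z + real n' * (- lam * T)}"
    by blast
  then have "measure (sample_dist n' d ths sg)
      {Z \<in> space (sample_dist n' d ths sg). real n' * T \<le> loss_sum n' d th Z}
    \<le> measure (sample_dist n' d ths sg) {Z \<in> space (sample_dist n' d ths sg).
           0 \<le> lam * loss_sum n' d th Z + real n' * (- lam * T)}"
    by (rule S.finite_measure_mono) measurable
  also have "\<dots> \<le> exp (- real n' * (eps\<^sup>2 / 16))"
    using x eps by (intro sample_residual_chernoff[OF sg _ exponent[unfolded V_def]]) (simp add: x_def V_def)
  finally show ?thesis by simp
qed

lemma sample_residual_lower_tail:
  fixes eps T :: real
  assumes sg: "0 < sg" and eps: "0 \<le> eps" "eps \<le> 2"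
    and T: "T \<le> (1 - eps) * residual_variance d ths th sg"
  shows "measure (sample_dist n' d ths sg)
           {Z \<in> space (sample_dist n' d ths sg). loss_sum n' d th Z \<le> real n' * T}
         \<le> exp (- real n' * eps\<^sup>2 / 8)"
proof -
  interpret S: prob_space "sample_dist n' d ths sg" by (rule prob_space_sample_dist[OF sg])
  define V where "V = residual_variance d ths th sg"
  have V: "0 < V" using residual_variance_pos[OF sg] by (simp add: V_def)
  define lam where "lam = eps / (4 * V)"
  have lam: "0 \<le> lam" using eps V by (simp add: lam_def)
  have z: "1 - 2 * (- lam) * V = 1 + eps / 2" using V by (simp add: lam_def)
  have "eps / 2 - (eps / 2)\<^sup>2 \<le> ln (1 + eps / 2)"
    using eps by (intro ln_one_plus_pos_lower_bound) simp_all
  then have "lam * T - ln (1 + eps / 2) / 2 \<le> lam * ((1 - eps) * V) - (eps / 2 - (eps / 2)\<^sup>2) / 2"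
    using mult_left_mono[OF T[folded V_def] lam] by (intro diff_mono divide_right_mono) simp_all
  also have "\<dots> = - (eps\<^sup>2 / 8)"
    using V by (simp add: lam_def power2_eq_square field_simps)
  finally have exponent: "lam * T - ln (1 - 2 * (- lam) * V) / 2 \<le> - (eps\<^sup>2 / 8)"
    by (simp only: z)
  have "0 \<le> (- lam) * s + real n' * (lam * T)" if "s \<le> real n' * T" for s
    using mult_left_mono[OF that lam] by (simp add: algebra_simps)
  then have "{Z \<in> space (sample_dist n' d ths sg). loss_sum n' d th Z \<le> real n' * T}
      \<subseteq> {Z \<in> space (sample_dist n' d ths sg).
           0 \<le> (- lam) * loss_sum n' d th Z + real n' * (lam * T)}"
    by blast
  then have "measure (sample_dist n' d ths sg)
      {Z \<in> space (sample_dist n' d ths sg). loss_sum n' d th Z \<le> real n' * T}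
    \<le> measure (sample_dist n' d ths sg) {Z \<in> space (sample_dist n' d ths sg).
           0 \<le> (- lam) * loss_sum n' d th Z + real n' * (lam * T)}"
    by (rule S.finite_measure_mono) measurable
  also have "\<dots> \<le> exp (- real n' * (eps\<^sup>2 / 8))"
    using z eps by (intro sample_residual_chernoff[OF sg _ exponent[unfolded V_def]]) (simp add: V_def)
  finally show ?thesis by simp
qed

section \<open>Cluster assignment\<close>

lemma emp_loss_le_iff:
  "emp_loss n' d th' Z \<le> emp_loss n' d th Z
   \<longleftrightarrow> loss_sum n' d th' Z \<le> loss_sum n' d th Z"
  by (cases "n' = 0") (simp_all add: emp_loss_def loss_sum_def divide_le_cancel)

lemma
  assumes "0 < k"
  shows assign_lt: "assign n' d k theta Z < k"
    and assign_minimal: "l < k \<Longrightarrow> emp_loss n' d (theta (assign n' d k theta Z)) Z \<le> emp_loss n' d (theta l) Z"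
proof -
  let ?L = "\<lambda>l. emp_loss n' d (theta l) Z"
  have "Min (?L ` {..<k}) \<in> ?L ` {..<k}"
    using assms by (intro Min_in) auto
  then obtain m where "m < k" "?L m = Min (?L ` {..<k})"
    by auto
  then have "m < k \<and> (\<forall>l<k. ?L m \<le> ?L l)" by simp
  then have "assign n' d k theta Z < k \<and> (\<forall>l<k. ?L (assign n' d k theta Z) \<le> ?L l)"
    unfolding assign_def by (rule LeastI)
  then show "assign n' d k theta Z < k" "l < k \<Longrightarrow> ?L (assign n' d k theta Z) \<le> ?L l"
    by auto
qed

lemma residual_variance_separation:
  fixes alpha D sg :: real
  assumes sg: "0 < sg" and alpha: "0 \<le> alpha" "alpha < 1/2"
    and near: "vnorm d (ths - th) \<le> (1/2 - alpha) * D"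
    and far: "(1/2 + alpha) * D \<le> vnorm d (ths - th')"
  defines "q \<equiv> alpha * D\<^sup>2 / (D\<^sup>2 + sg\<^sup>2)"
  shows "0 \<le> q" "q \<le> 1/2" "residual_variance d ths th sg \<le> D\<^sup>2 + sg\<^sup>2"
    and "residual_variance d ths th sg + 2 * q * (D\<^sup>2 + sg\<^sup>2) \<le> residual_variance d ths th' sg"
proof -
  have "0 \<le> (1/2 - alpha) * D" using near vnorm_nonneg[of d "ths - th"] by linarith
  then have D: "0 \<le> D" using alpha by (simp add: zero_le_mult_iff)
  define S where "S = D\<^sup>2 + sg\<^sup>2"
  have S: "0 < S" using sg by (simp add: S_def add_nonneg_pos)
  have "D\<^sup>2 / S \<le> 1" using S by (simp add: S_def)
  then have "q \<le> alpha"
    using alpha mult_left_mono[of "D\<^sup>2 / S" 1 alpha] by (simp add: q_def S_def)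
  then show "q \<le> 1/2" using alpha by linarith
  show "0 \<le> q" using alpha S by (simp add: q_def S_def)
  have near2: "(vnorm d (ths - th))\<^sup>2 \<le> ((1/2 - alpha) * D)\<^sup>2"
    using near vnorm_nonneg by (intro power_mono) auto
  have far2: "((1/2 + alpha) * D)\<^sup>2 \<le> (vnorm d (ths - th'))\<^sup>2"
    using far alpha D by (intro power_mono) auto
  have "((1/2 - alpha) * D)\<^sup>2 \<le> D\<^sup>2"
    using alpha D by (intro power_mono) (auto intro: mult_left_le_one_le)
  then show "residual_variance d ths th sg \<le> D\<^sup>2 + sg\<^sup>2"
    using near2 by (simp add: residual_variance_def)
  have "q * S = alpha * D\<^sup>2" using S by (simp add: q_def S_def)
  moreover have "((1/2 + alpha) * D)\<^sup>2 - ((1/2 - alpha) * D)\<^sup>2 = 2 * alpha * D\<^sup>2"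
    by (simp add: power2_eq_square algebra_simps)
  ultimately show "residual_variance d ths th sg + 2 * q * (D\<^sup>2 + sg\<^sup>2) \<le> residual_variance d ths th' sg"
    using near2 far2 by (simp add: S_def residual_variance_def algebra_simps)
qed

lemma sample_misranking_prob_le:
  fixes q S :: real
  assumes sg: "0 < sg" and q: "0 \<le> q" "q \<le> 1/2"
    and BS: "residual_variance d ths th sg \<le> S"
    and gap: "residual_variance d ths th sg + 2 * q * S \<le> residual_variance d ths th' sg"
  shows "measure (sample_dist n' d ths sg)
           {Z \<in> space (sample_dist n' d ths sg). emp_loss n' d th' Z \<le> emp_loss n' d th Z}
         \<le> 2 * exp (- real n' * q\<^sup>2 / 32)"
proof -
  interpret M: prob_space "sample_dist n' d ths sg" by (rule prob_space_sample_dist[OF sg])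
  define B where "B = residual_variance d ths th sg"
  define A where "A = residual_variance d ths th' sg"
  have S: "0 < S" using BS residual_variance_pos[OF sg, of d ths th] by linarith
  define T where "T = B + q * S"
  \<comment> \<open>Either the loss at \<open>th\<close> is atypically large or the loss at \<open>th'\<close> is atypically small.\<close>
  define E1 where "E1 = {Z \<in> space (sample_dist n' d ths sg). real n' * T \<le> loss_sum n' d th Z}"
  define E2 where "E2 = {Z \<in> space (sample_dist n' d ths sg). loss_sum n' d th' Z \<le> real n' * T}"
  have "{Z \<in> space (sample_dist n' d ths sg). emp_loss n' d th' Z \<le> emp_loss n' d th Z} \<subseteq> E1 \<union> E2"
    by (auto simp: E1_def E2_def emp_loss_le_iff)
  then have "measure (sample_dist n' d ths sg)
      {Z \<in> space (sample_dist n' d ths sg). emp_loss n' d th' Z \<le> emp_loss n' d th Z}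
    \<le> measure (sample_dist n' d ths sg) (E1 \<union> E2)"
    by (rule M.finite_measure_mono) (simp add: E1_def E2_def)
  also have "\<dots> \<le> measure (sample_dist n' d ths sg) E1 + measure (sample_dist n' d ths sg) E2"
    by (rule measure_Un_le) (simp_all add: E1_def E2_def)
  also have "measure (sample_dist n' d ths sg) E1 \<le> exp (- real n' * q\<^sup>2 / 16)"
    unfolding E1_def T_def B_def using q
    by (intro sample_residual_upper_tail[OF sg BS, where eps = q]) simp_all
  also have "measure (sample_dist n' d ths sg) E2 \<le> exp (- real n' * (q / 2)\<^sup>2 / 8)"
  proof -
    have "(B + 2 * q * S) * (1 - q / 2) = B + 2 * q * S - q * B / 2 - q * q * S"
      by (simp add: algebra_simps)
    moreover have "q * B \<le> q * S"
      using q BS by (simp add: B_def mult_left_mono)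
    moreover have "q * q * S \<le> q * (1/2) * S"
      using q S by (intro mult_right_mono mult_left_mono) simp_all
    moreover have "(B + 2 * q * S) * (1 - q / 2) \<le> A * (1 - q / 2)"
      using gap q by (intro mult_right_mono) (auto simp: A_def B_def)
    ultimately have "T \<le> (1 - q / 2) * A"
      unfolding T_def by (simp add: algebra_simps)
    then show ?thesis
      unfolding E2_def using sg q
      by (intro sample_residual_lower_tail) (simp_all add: A_def)
  qed
  also have "exp (- real n' * q\<^sup>2 / 16) + exp (- real n' * (q / 2)\<^sup>2 / 8) \<le> 2 * exp (- real n' * q\<^sup>2 / 32)"
    by (simp add: power_divide)
  finally show ?thesis by simp
qed

lemma
  fixes theta :: "nat \<Rightarrow> nat \<Rightarrow> real"
  assumes sg: "0 < sg" and j: "j < k" and B: "0 \<le> B"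
    and misranking: "\<And>j'. j' < k \<Longrightarrow> j' \<noteq> j \<Longrightarrow>
      measure (sample_dist n' d ths sg)
        {Z \<in> space (sample_dist n' d ths sg). emp_loss n' d (theta j') Z \<le> emp_loss n' d (theta j) Z} \<le> B"
  shows measure_assign_eq_le: "j' < k \<Longrightarrow> j' \<noteq> j \<Longrightarrow>
      measure (sample_dist n' d ths sg) {Z \<in> space (sample_dist n' d ths sg). assign n' d k theta Z = j'} \<le> B"
    and measure_assign_ne_le:
      "measure (sample_dist n' d ths sg) {Z \<in> space (sample_dist n' d ths sg). assign n' d k theta Z \<noteq> j}
       \<le> real k * B"
proof -
  interpret M: prob_space "sample_dist n' d ths sg" by (rule prob_space_sample_dist[OF sg])
  define E where "E j' = {Z \<in> space (sample_dist n' d ths sg). emp_loss n' d (theta j') Z \<le> emp_loss n' d (theta j) Z}"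
    for j'
  have E_sets: "E j' \<in> sets (sample_dist n' d ths sg)" for j'
    unfolding E_def emp_loss_def by measurable
  have assign_E: "{Z \<in> space (sample_dist n' d ths sg). assign n' d k theta Z = j'} \<subseteq> E j'" for j'
    using assign_minimal[OF _ j] j by (auto simp: E_def)
  show "measure (sample_dist n' d ths sg) {Z \<in> space (sample_dist n' d ths sg). assign n' d k theta Z = j'} \<le> B"
    if "j' < k" "j' \<noteq> j"
    using M.finite_measure_mono[OF assign_E E_sets] misranking[OF that] unfolding E_def by (rule order_trans)
  have "{Z \<in> space (sample_dist n' d ths sg). assign n' d k theta Z \<noteq> j} \<subseteq> (\<Union>j'\<in>{..<k} - {j}. E j')"
    using assign_E assign_lt[of k] j by fastforce
  then have "measure (sample_dist n' d ths sg) {Z \<in> space (sample_dist n' d ths sg). assign n' d k theta Z \<noteq> j}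
      \<le> measure (sample_dist n' d ths sg) (\<Union>j'\<in>{..<k} - {j}. E j')"
    using E_sets by (intro M.finite_measure_mono) auto
  also have "\<dots> \<le> (\<Sum>j'\<in>{..<k} - {j}. measure (sample_dist n' d ths sg) (E j'))"
    using E_sets by (intro measure_UNION_le) auto
  also have "\<dots> \<le> real (card ({..<k} - {j})) * B"
    using misranking by (intro sum_bounded_above) (auto simp: E_def)
  also have "\<dots> \<le> real k * B"
    using B card_mono[of "{..<k}" "{..<k} - {j}"] by (intro mult_right_mono) auto
  finally show "measure (sample_dist n' d ths sg) {Z \<in> space (sample_dist n' d ths sg). assign n' d k theta Z \<noteq> j}
      \<le> real k * B" .
qed

theorem lemma1:
  shows "\<exists>c1 c2 :: real. c1 > 0 \<and> c2 > 0 \<and>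
    (\<forall>(d::nat) (k::nat) (n'::nat) (thetas::nat \<Rightarrow> nat \<Rightarrow> real) (theta::nat \<Rightarrow> nat \<Rightarrow> real)
       (sg::real) (alpha::real) (j::nat).
       2 \<le> k \<longrightarrow> 0 < n' \<longrightarrow> 0 < sg \<longrightarrow> 0 < alpha \<longrightarrow> alpha < 1/2 \<longrightarrow> j < k \<longrightarrow>
       (\<forall>l<k. vnorm d (theta l - thetas l) \<le> (1/2 - alpha) * Delta d k thetas) \<longrightarrow>
       (let M = sample_dist n' d (thetas j) sg;
            rho = (Delta d k thetas)\<^sup>2 / sg\<^sup>2;
            B = c1 * exp (- c2 * real n' * (alpha * rho / (rho + 1))\<^sup>2)
        in (\<forall>j'<k. j' \<noteq> j \<longrightarrow>
              measure M {Z \<in> space M. assign n' d k theta Z = j'} \<le> B)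
         \<and> measure M {Z \<in> space M. assign n' d k theta Z \<noteq> j} \<le> real k * B))"
proof (rule exI[of _ 2], rule exI[of _ "1/32"], intro conjI allI impI)
  fix d k n' :: nat and thetas theta :: "nat \<Rightarrow> nat \<Rightarrow> real" and sg alpha :: real and j :: nat
  \<comment> \<open>The bounds hold without \<open>k \<ge> 2\<close> and \<open>n' > 0\<close>.\<close>
  assume "2 \<le> k" "0 < n'" and sg: "0 < sg" and alpha: "0 < alpha" "alpha < 1/2" and j: "j < k"
    and close: "\<forall>l<k. vnorm d (theta l - thetas l) \<le> (1/2 - alpha) * Delta d k thetas"
  define D where "D = Delta d k thetas"
  have near: "vnorm d (thetas j - theta j) \<le> (1/2 - alpha) * D"
    using close j by (simp add: D_def vnorm_minus_commute)
  have far: "(1/2 + alpha) * D \<le> vnorm d (thetas j - theta j')" if "j' < k" "j' \<noteq> j" for j'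
    using Delta_minus_vnorm_le[OF j that(1) not_sym[OF that(2)], of d thetas theta] close that(1)
    unfolding D_def distrib_right left_diff_distrib by fastforce
  define q where "q = alpha * (D\<^sup>2 / sg\<^sup>2) / (D\<^sup>2 / sg\<^sup>2 + 1)"
  have q: "q = alpha * D\<^sup>2 / (D\<^sup>2 + sg\<^sup>2)"
    using sg by (simp add: q_def field_simps)
  have misranking: "measure (sample_dist n' d (thetas j) sg)
      {Z \<in> space (sample_dist n' d (thetas j) sg). emp_loss n' d (theta j') Z \<le> emp_loss n' d (theta j) Z}
    \<le> 2 * exp (- (1/32) * real n' * q\<^sup>2)" if "j' < k" "j' \<noteq> j" for j'
    using sample_misranking_prob_le[OF sg residual_variance_separation[OF sg _ alpha(2) near far[OF that]]] alpha
    by (simp add: q)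
  show "let M = sample_dist n' d (thetas j) sg; rho = (Delta d k thetas)\<^sup>2 / sg\<^sup>2;
            B = 2 * exp (- (1/32) * real n' * (alpha * rho / (rho + 1))\<^sup>2)
        in (\<forall>j'<k. j' \<noteq> j \<longrightarrow> measure M {Z \<in> space M. assign n' d k theta Z = j'} \<le> B)
         \<and> measure M {Z \<in> space M. assign n' d k theta Z \<noteq> j} \<le> real k * B"
    unfolding Let_def D_def[symmetric] q_def[symmetric]
    using measure_assign_eq_le[where theta = theta, OF sg j _ misranking]
      measure_assign_ne_le[where theta = theta, OF sg j _ misranking]
    by simp
qed simp_all

end
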